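(* For $n\ge 4$, the dom-bondage number of the path $P_n$ is $B_{dom}(P_n)=2$ if $n\equiv 2\pmod 4$, and $B_{dom}(P_n)=1$ otherwise.
   Context: A dominated coloring of a graph is a proper coloring in which every color class is dominated by at least one vertex, i.e. for each color class $C$ there is a vertex adjacent to every vertex of $C$; $\chi_{dom}(G)$ is the minimum number of colors in a dominated coloring. The dom-bondage number $B_{dom}(G)$ is the minimum number of edges of $G$ whose removal changes the dominated chromatic number of $G$. *)

theory Defs
  imports Main
begin

definition adj :: "'a set set \<Rightarrow> 'a \<Rightarrow> 'a \<Rightarrow> bool" where
  "adj E u v \<longleftrightarrow> u \<noteq> v \<and> {u, v} \<in> E"

definition no_isolated :: "'a set \<Rightarrow> 'a set set \<Rightarrow> bool" where
  "no_isolated V E \<longleftrightarrow> (\<forall>v\<in>V. \<exists>w\<in>V. adj E w v)"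

definition dominated_coloring :: "'a set \<Rightarrow> 'a set set \<Rightarrow> nat \<Rightarrow> ('a \<Rightarrow> nat) \<Rightarrow> bool" where
  "dominated_coloring V E k c \<longleftrightarrow>
     (\<forall>v\<in>V. c v < k) \<and>
     (\<forall>u\<in>V. \<forall>v\<in>V. adj E u v \<longrightarrow> c u \<noteq> c v) \<and>
     (\<forall>i<k. \<exists>w\<in>V. \<forall>v\<in>V. c v = i \<longrightarrow> adj E w v)"

definition chi_dom :: "'a set \<Rightarrow> 'a set set \<Rightarrow> nat" where
  "chi_dom V E = (LEAST k. \<exists>c. dominated_coloring V E k c)"

text \<open>Dom-bondage number: least number of edges whose removal changes chi_dom
  (the resulting graph is required to have no isolated vertices, so that
  chi_dom of it is defined).\<close>
definition B_dom :: "'a set \<Rightarrow> 'a set set \<Rightarrow> nat" where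
  "B_dom V E = (LEAST m. \<exists>F. F \<subseteq> E \<and> card F = m \<and> no_isolated V (E - F) \<and>
                        chi_dom V (E - F) \<noteq> chi_dom V E)"

definition path_edges :: "nat \<Rightarrow> nat set set" where
  "path_edges n = {{i, Suc i} | i. Suc i < n}"

end

(*
  In a dominated colouring of a spanning subgraph of P_n every colour class has a common
  neighbour, so it is a single vertex or a pair {u, u+2} such that both edges {u, u+1} and
  {u+1, u+2} are present. Hence the colouring is injective on the j < n with j mod 4 < 2, which
  gives chi_dom >= (n+3) div 4 + (n+2) div 4 for every such subgraph; on P_n itself this bound is
  attained by giving 4q, 4q+2 one colour and 4q+1, 4q+3 another.

  Deleting the edge {1, 2} gives the vertices 0 and 1 private colours, so chi_dom becomes at least
  2 + chi_dom (P_(n-2)), which exceeds chi_dom (P_n) unless n mod 4 = 2. If n mod 4 = 2, deleting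
  {1, 2} and {3, 4} gives four private colours, whereas deleting a single edge without isolating a
  vertex leaves paths P_a and P_(n-a), and their optimal colourings combine to one with
  chi_dom (P_a) + chi_dom (P_(n-a)) colours, which equals chi_dom (P_n) because n mod 4 = 2.
*)

theory Submission
  imports Defs
begin

definition chi_dom_path :: "nat \<Rightarrow> nat" where
  "chi_dom_path n = (n + 3) div 4 + (n + 2) div 4"

text \<open>Colour 2q goes to 4q and 4q + 2, dominated by 4q + 1; colour 2q + 1 goes to 4q + 1 and
  4q + 3, dominated by 4q + 2.\<close>
definition path_colour :: "nat \<Rightarrow> nat" where
  "path_colour j = 2 * (j div 4) + j mod 2"

lemma nat_less_4_cases: "(r::nat) < 4 \<Longrightarrow> r = 0 \<or> r = 1 \<or> r = 2 \<or> r = 3"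
  by auto

lemma chi_dom_path_mult_add: "chi_dom_path (4 * q + r) = 2 * q + chi_dom_path r"
proof -
  have "(4 * q + m) div 4 = q + m div 4" for m :: nat by simp
  from this[of "r + 3"] this[of "r + 2"] show ?thesis
    unfolding chi_dom_path_def by (simp add: add.assoc)
qed

lemma chi_dom_path_mono: "m \<le> n \<Longrightarrow> chi_dom_path m \<le> chi_dom_path n"
  unfolding chi_dom_path_def by (simp add: add_mono div_le_mono)

lemma chi_dom_path_Suc: "chi_dom_path (Suc n) = chi_dom_path n + (if n mod 4 < 2 then 1 else 0)"
proof -
  have "chi_dom_path (Suc r) = chi_dom_path r + (if r < 2 then 1 else 0)" if "r < 4" for r
    using nat_less_4_cases[OF that] by (elim disjE) (simp_all add: chi_dom_path_def)
  then show ?thesis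
    using chi_dom_path_mult_add[of "n div 4" "n mod 4"] chi_dom_path_mult_add[of "n div 4" "Suc (n mod 4)"]
    by simp
qed

lemma chi_dom_path_add:
  assumes "(a + b) mod 4 = 2"
  shows "chi_dom_path a + chi_dom_path b = chi_dom_path (a + b)"
proof -
  have "chi_dom_path r + chi_dom_path s = chi_dom_path (r + s)"
    if "r < 4" "s < 4" "(r + s) mod 4 = 2" for r s
    using nat_less_4_cases[OF that(1)] nat_less_4_cases[OF that(2)] that(3)
    by (elim disjE) (simp_all add: chi_dom_path_def)
  from this[of "a mod 4" "b mod 4"] assms show ?thesis
    using chi_dom_path_mult_add[of "a div 4" "a mod 4"] chi_dom_path_mult_add[of "b div 4" "b mod 4"]
      chi_dom_path_mult_add[of "a div 4 + b div 4" "a mod 4 + b mod 4"]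
    by (simp add: algebra_simps mod_add_eq)
qed

lemma chi_dom_path_add_2_less: "n mod 4 \<noteq> 0 \<Longrightarrow> chi_dom_path (n + 2) < chi_dom_path n + 2"
  using chi_dom_path_Suc[of n] chi_dom_path_Suc[of "Suc n"] by (auto simp: mod_Suc split: if_splits)

lemma card_mod_4_less_2: "card {j. j < n \<and> j mod 4 < (2::nat)} = chi_dom_path n"
proof (induction n)
  case 0
  then show ?case by (simp add: chi_dom_path_def)
next
  case (Suc n)
  have "{j. j < Suc n \<and> j mod 4 < (2::nat)} =
        {j. j < n \<and> j mod 4 < 2} \<union> (if n mod 4 < 2 then {n} else {})"
    by (auto simp: less_Suc_eq)
  then show ?case using Suc.IH by (simp add: chi_dom_path_Suc)
qed

lemma path_colour_mod2: "path_colour j mod 2 = j mod 2"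
  unfolding path_colour_def by simp

lemma path_colour_Suc: "path_colour (Suc j) \<noteq> path_colour j"
proof
  assume "path_colour (Suc j) = path_colour j"
  then have "Suc j mod 2 = j mod 2" by (metis path_colour_mod2)
  then show False by presburger
qed

lemma path_colour_less: "j < n \<Longrightarrow> path_colour j < chi_dom_path n"
proof -
  assume "j < n"
  have "r mod 2 < chi_dom_path (Suc r)" if "r < 4" for r
    using nat_less_4_cases[OF that] by (elim disjE) (simp_all add: chi_dom_path_def)
  from this[of "j mod 4"]
  have "path_colour j < chi_dom_path (4 * (j div 4) + Suc (j mod 4))"
    unfolding chi_dom_path_mult_add path_colour_def by (simp add: mod_mod_cancel)
  also have "4 * (j div 4) + Suc (j mod 4) = Suc j" by simp
  also have "chi_dom_path (Suc j) \<le> chi_dom_path n" using \<open>j < n\<close> by (intro chi_dom_path_mono) simp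
  finally show ?thesis .
qed

lemma path_colour_eqD:
  assumes "path_colour i = path_colour j"
  shows "Suc i = 4 * (j div 4) + 1 + j mod 2 \<or> i = 4 * (j div 4) + 2 + j mod 2"
proof -
  have parity: "i mod 2 = j mod 2" using assms path_colour_mod2 by metis
  with assms have "i div 4 = j div 4" unfolding path_colour_def by simp
  then have block: "4 * (j div 4) + i mod 4 = i" using div_mult_mod_eq[of i 4] by simp
  have "i mod 4 < 4" by simp
  from nat_less_4_cases[OF this]
  have "Suc (4 * (j div 4) + i mod 4) = 4 * (j div 4) + 1 + (i mod 4) mod 2 \<or>
        4 * (j div 4) + i mod 4 = 4 * (j div 4) + 2 + (i mod 4) mod 2"
    by (elim disjE) simp_all
  moreover have "(i mod 4) mod 2 = j mod 2" using parity by (simp add: mod_mod_cancel)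
  ultimately show ?thesis by (simp only: block)
qed

lemma chi_dom_le: "dominated_coloring V E k c \<Longrightarrow> chi_dom V E \<le> k"
  unfolding chi_dom_def by (auto intro: Least_le)

lemma le_chi_dom:
  assumes "dominated_coloring V E k\<^sub>0 c\<^sub>0" and "\<And>k c. dominated_coloring V E k c \<Longrightarrow> m \<le> k"
  shows "m \<le> chi_dom V E"
proof -
  have "\<exists>c. dominated_coloring V E (chi_dom V E) c"
    unfolding chi_dom_def by (rule LeastI_ex) (use assms(1) in blast)
  then show ?thesis using assms(2) by blast
qed

lemma dominated_coloring_id: "no_isolated {0..<n} E \<Longrightarrow> dominated_coloring {0..<n} E n id"
  unfolding no_isolated_def dominated_coloring_def adj_def by auto


lemma adj_Un_cases:
  assumes "adj (E\<^sub>1 \<union> E\<^sub>2) u v" and "V\<^sub>1 \<inter> V\<^sub>2 = {}"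
    and E1: "\<forall>e\<in>E\<^sub>1. e \<subseteq> V\<^sub>1" and E2: "\<forall>e\<in>E\<^sub>2. e \<subseteq> V\<^sub>2"
  obtains "adj E\<^sub>1 u v" "u \<in> V\<^sub>1" "v \<in> V\<^sub>1"
    | "adj E\<^sub>2 u v" "u \<notin> V\<^sub>1" "v \<notin> V\<^sub>1" "u \<in> V\<^sub>2" "v \<in> V\<^sub>2"
proof -
  from assms(1) have "u \<noteq> v" and "{u, v} \<in> E\<^sub>1 \<or> {u, v} \<in> E\<^sub>2" unfolding adj_def by auto
  then show thesis
  proof (elim disjE)
    assume "{u, v} \<in> E\<^sub>1"
    with E1 have "{u, v} \<subseteq> V\<^sub>1" by blast
    then show thesis using that(1) \<open>u \<noteq> v\<close> \<open>{u, v} \<in> E\<^sub>1\<close> unfolding adj_def by simp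
  next
    assume "{u, v} \<in> E\<^sub>2"
    with E2 have "{u, v} \<subseteq> V\<^sub>2" by blast
    with assms(2) have "u \<notin> V\<^sub>1" "v \<notin> V\<^sub>1" by blast+
    then show thesis using that(2) \<open>u \<noteq> v\<close> \<open>{u, v} \<in> E\<^sub>2\<close> \<open>{u, v} \<subseteq> V\<^sub>2\<close>
      unfolding adj_def by simp
  qed
qed

lemma dominated_coloring_Un:
  assumes c1: "dominated_coloring V\<^sub>1 E\<^sub>1 k\<^sub>1 c\<^sub>1" and c2: "dominated_coloring V\<^sub>2 E\<^sub>2 k\<^sub>2 c\<^sub>2"
    and disj: "V\<^sub>1 \<inter> V\<^sub>2 = {}" and E1: "\<forall>e\<in>E\<^sub>1. e \<subseteq> V\<^sub>1" and E2: "\<forall>e\<in>E\<^sub>2. e \<subseteq> V\<^sub>2"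
  shows "dominated_coloring (V\<^sub>1 \<union> V\<^sub>2) (E\<^sub>1 \<union> E\<^sub>2) (k\<^sub>1 + k\<^sub>2)
           (\<lambda>v. if v \<in> V\<^sub>1 then c\<^sub>1 v else k\<^sub>1 + c\<^sub>2 v)"
    (is "dominated_coloring _ _ _ ?c")
proof -
  have range1: "\<forall>v\<in>V\<^sub>1. c\<^sub>1 v < k\<^sub>1"
    and proper1: "\<forall>u\<in>V\<^sub>1. \<forall>v\<in>V\<^sub>1. adj E\<^sub>1 u v \<longrightarrow> c\<^sub>1 u \<noteq> c\<^sub>1 v"
    and dom1: "\<forall>i<k\<^sub>1. \<exists>w\<in>V\<^sub>1. \<forall>v\<in>V\<^sub>1. c\<^sub>1 v = i \<longrightarrow> adj E\<^sub>1 w v"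
    using c1 unfolding dominated_coloring_def by blast+
  have range2: "\<forall>v\<in>V\<^sub>2. c\<^sub>2 v < k\<^sub>2"
    and proper2: "\<forall>u\<in>V\<^sub>2. \<forall>v\<in>V\<^sub>2. adj E\<^sub>2 u v \<longrightarrow> c\<^sub>2 u \<noteq> c\<^sub>2 v"
    and dom2: "\<forall>i<k\<^sub>2. \<exists>w\<in>V\<^sub>2. \<forall>v\<in>V\<^sub>2. c\<^sub>2 v = i \<longrightarrow> adj E\<^sub>2 w v"
    using c2 unfolding dominated_coloring_def by blast+
  show ?thesis
    unfolding dominated_coloring_def
  proof (intro conjI ballI allI impI)
    fix v assume "v \<in> V\<^sub>1 \<union> V\<^sub>2"
    then show "?c v < k\<^sub>1 + k\<^sub>2" using range1 range2 by fastforce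
  next
    fix u v assume "adj (E\<^sub>1 \<union> E\<^sub>2) u v"
    then consider "adj E\<^sub>1 u v" "u \<in> V\<^sub>1" "v \<in> V\<^sub>1"
      | "adj E\<^sub>2 u v" "u \<notin> V\<^sub>1" "v \<notin> V\<^sub>1" "u \<in> V\<^sub>2" "v \<in> V\<^sub>2"
      using disj E1 E2 by (rule adj_Un_cases)
    then show "?c u \<noteq> ?c v"
      by cases (use proper1 proper2 in simp_all)
  next
    fix i assume i: "i < k\<^sub>1 + k\<^sub>2"
    show "\<exists>w\<in>V\<^sub>1 \<union> V\<^sub>2. \<forall>v\<in>V\<^sub>1 \<union> V\<^sub>2. ?c v = i \<longrightarrow> adj (E\<^sub>1 \<union> E\<^sub>2) w v"
    proof (cases "i < k\<^sub>1")
      case True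
      then obtain w where "w \<in> V\<^sub>1" "\<forall>v\<in>V\<^sub>1. c\<^sub>1 v = i \<longrightarrow> adj E\<^sub>1 w v"
        using dom1 by blast
      with True show ?thesis by (intro bexI[of _ w]) (auto simp: adj_def)
    next
      case False
      with i have "i - k\<^sub>1 < k\<^sub>2" by simp
      with dom2 obtain w where "w \<in> V\<^sub>2" "\<forall>v\<in>V\<^sub>2. c\<^sub>2 v = i - k\<^sub>1 \<longrightarrow> adj E\<^sub>2 w v"
        by blast
      with False range1 show ?thesis by (intro bexI[of _ w]) (auto simp: adj_def)
    qed
  qed
qed

lemma B_dom_eqI:
  assumes "finite E" and "F \<subseteq> E" "card F = m" "no_isolated V (E - F)"
    "chi_dom V (E - F) \<noteq> chi_dom V E"
    and "\<And>F. F \<subseteq> E \<Longrightarrow> 0 < card F \<Longrightarrow> card F < m \<Longrightarrow> no_isolated V (E - F) \<Longrightarrow>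
      chi_dom V (E - F) = chi_dom V E"
  shows "B_dom V E = m"
  unfolding B_dom_def
proof (rule Least_equality)
  show "\<exists>F. F \<subseteq> E \<and> card F = m \<and> no_isolated V (E - F) \<and> chi_dom V (E - F) \<noteq> chi_dom V E"
    using assms(2-5) by blast
next
  fix m' assume "\<exists>F. F \<subseteq> E \<and> card F = m' \<and> no_isolated V (E - F) \<and> chi_dom V (E - F) \<noteq> chi_dom V E"
  then obtain F where F: "F \<subseteq> E" "card F = m'" "no_isolated V (E - F)"
    "chi_dom V (E - F) \<noteq> chi_dom V E"
    by blast
  then have "F \<noteq> {}" by auto
  with F(1) \<open>finite E\<close> have "0 < card F" by (simp add: card_gt_0_iff finite_subset)
  with F assms(6)[of F] show "m \<le> m'" by (meson not_le)
qed

definition segment_edges :: "nat \<Rightarrow> nat \<Rightarrow> nat set set" where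
  "segment_edges s t = {{i, Suc i} | i. s \<le> i \<and> Suc i < t}"

lemma path_edges_eq_segment_edges: "path_edges n = segment_edges 0 n"
  unfolding path_edges_def segment_edges_def by simp

lemma segment_edgesI: "s \<le> i \<Longrightarrow> Suc i < t \<Longrightarrow> {i, Suc i} \<in> segment_edges s t"
  unfolding segment_edges_def by blast

lemma segment_edges_subset: "e \<in> segment_edges s t \<Longrightarrow> e \<subseteq> {s..<t}"
  unfolding segment_edges_def by auto

lemma adj_segment_edgesD:
  assumes "adj E u v" "E \<subseteq> segment_edges s t"
  shows "(v = Suc u \<or> u = Suc v) \<and> s \<le> u \<and> s \<le> v \<and> u < t \<and> v < t"
proof -
  from assms obtain i where "{u, v} = {i, Suc i}" "s \<le> i" "Suc i < t"
    unfolding adj_def segment_edges_def by blast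
  then show ?thesis by (auto simp: doubleton_eq_iff)
qed

lemma adj_segment_edges_Suc:
  "s \<le> u \<Longrightarrow> Suc u < t \<Longrightarrow> adj (segment_edges s t) u (Suc u) \<and> adj (segment_edges s t) (Suc u) u"
  unfolding adj_def by (auto simp: insert_commute intro: segment_edgesI)

lemma segment_colour_class_dominated:
  assumes "s + 2 \<le> t" and v: "v \<in> {s..<t}"
  shows "\<exists>w\<in>{s..<t}. \<forall>u\<in>{s..<t}.
           path_colour (u - s) = path_colour (v - s) \<longrightarrow> adj (segment_edges s t) w u"
proof -
  \<comment> \<open>the common neighbour of the vertices of this colour, whether or not it lies in the segment\<close>
  define m where "m = s + 4 * ((v - s) div 4) + 1 + (v - s) mod 2"
  have members: "Suc u = m \<or> u = Suc m"
    if "u \<in> {s..<t}" "path_colour (u - s) = path_colour (v - s)" for u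
  proof -
    from path_colour_eqD[OF that(2)] have "Suc (u - s) = 4 * ((v - s) div 4) + 1 + (v - s) mod 2 \<or>
      u - s = 4 * ((v - s) div 4) + 2 + (v - s) mod 2" .
    moreover have "s \<le> u" using that(1) by simp
    ultimately show ?thesis unfolding m_def by linarith
  qed
  show ?thesis
  proof (cases "m < t")
    case True
    have "s \<le> m" unfolding m_def by simp
    show ?thesis
    proof (intro bexI[of _ m] ballI impI)
      fix u assume u: "u \<in> {s..<t}" "path_colour (u - s) = path_colour (v - s)"
      from members[OF u] show "adj (segment_edges s t) m u"
      proof
        assume "Suc u = m"
        then show ?thesis using adj_segment_edges_Suc[of s u t] u(1) True by auto
      next
        assume "u = Suc m"
        then show ?thesis using adj_segment_edges_Suc[of s m t] u(1) \<open>s \<le> m\<close> by auto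
      qed
    qed (use \<open>s \<le> m\<close> True in auto)
  next
    case False
    \<comment> \<open>then v is the last vertex and the only one of its colour\<close>
    with members[of v] v have "Suc v = t" "Suc v = m" by auto
    with assms(1) have "s < v" by simp
    show ?thesis
    proof (intro bexI[of _ "v - 1"] ballI impI)
      fix u assume "u \<in> {s..<t}" "path_colour (u - s) = path_colour (v - s)"
      with members \<open>Suc v = t\<close> \<open>Suc v = m\<close> have "u = v" by fastforce
      then show "adj (segment_edges s t) (v - 1) u"
        using adj_segment_edges_Suc[of s "v - 1" t] \<open>s < v\<close> \<open>Suc v = t\<close> by auto
    qed (use \<open>s < v\<close> \<open>Suc v = t\<close> in auto)
  qed
qed

lemma dominated_coloring_segment:
  assumes "s + 2 \<le> t"
  shows "dominated_coloring {s..<t} (segment_edges s t) (chi_dom_path (t - s)) (\<lambda>v. path_colour (v - s))"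
  unfolding dominated_coloring_def
proof (intro conjI ballI allI impI)
  fix v assume "v \<in> {s..<t}"
  then show "path_colour (v - s) < chi_dom_path (t - s)" by (intro path_colour_less) auto
next
  fix u v assume "adj (segment_edges s t) u v"
  then have "(v = Suc u \<or> u = Suc v) \<and> s \<le> u \<and> s \<le> v" using adj_segment_edgesD by blast
  then show "path_colour (u - s) \<noteq> path_colour (v - s)" using path_colour_Suc by (metis Suc_diff_le)
next
  fix i
  show "\<exists>w\<in>{s..<t}. \<forall>v\<in>{s..<t}. path_colour (v - s) = i \<longrightarrow> adj (segment_edges s t) w v"
  proof (cases "\<exists>v\<in>{s..<t}. path_colour (v - s) = i")
    case True
    then obtain v where v: "v \<in> {s..<t}" "path_colour (v - s) = i" by blast
    from segment_colour_class_dominated[OF assms v(1), unfolded v(2)] show ?thesis .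
  next
    case False
    moreover have "s \<in> {s..<t}" using assms by simp
    ultimately show ?thesis by blast
  qed
qed

lemma dominated_coloring_path_same_colour:
  assumes dc: "dominated_coloring {0..<n} E k c" and sub: "E \<subseteq> path_edges n"
    and uv: "u < v" "v < n" "c u = c v"
  shows "v = Suc (Suc u) \<and> {u, Suc u} \<in> E \<and> {Suc u, Suc (Suc u)} \<in> E"
proof -
  have "c u < k" using dc uv unfolding dominated_coloring_def by auto
  then obtain w where "\<forall>x\<in>{0..<n}. c x = c u \<longrightarrow> adj E w x"
    using dc unfolding dominated_coloring_def by auto
  with uv have "adj E w u" "adj E w v" by auto
  moreover from this sub have "w = Suc u" "v = Suc w"
    using adj_segment_edgesD[of E] uv unfolding path_edges_eq_segment_edges by (metis Suc_lessD less_not_sym not_less_eq)+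
  ultimately show ?thesis unfolding adj_def by (auto simp: insert_commute)
qed

lemma dominated_coloring_path_subgraph_ge:
  assumes dc: "dominated_coloring {0..<n} E k c" and sub: "E \<subseteq> path_edges n" and "s \<le> n"
    and cut: "\<forall>u<s. {u, Suc u} \<notin> E \<or> {Suc u, Suc (Suc u)} \<notin> E"
  shows "s + chi_dom_path (n - s) \<le> k"
proof -
  \<comment> \<open>By \<open>cut\<close> the vertices below s share their colour with no other vertex; among the
    others no two vertices of R are at distance 2, so c is injective on R.\<close>
  define R where "R = {..<s} \<union> (+) s ` {j. j < n - s \<and> j mod 4 < 2}"
  have R_sub: "R \<subseteq> {0..<n}" unfolding R_def using \<open>s \<le> n\<close> by auto
  have distinct: "c u \<noteq> c v" if "u \<in> R" "v \<in> R" "u < v" for u v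
  proof
    assume "c u = c v"
    moreover have "v < n" using R_sub that(2) by auto
    ultimately have "v = Suc (Suc u)" "{u, Suc u} \<in> E" "{Suc u, Suc (Suc u)} \<in> E"
      using dominated_coloring_path_same_colour[OF dc sub \<open>u < v\<close>] by auto
    with cut have "\<not> u < s" by blast
    with that(1,2) \<open>u < v\<close> obtain a b where "u = s + a" "v = s + b" "a mod 4 < 2" "b mod 4 < 2"
      unfolding R_def by auto
    with \<open>v = Suc (Suc u)\<close> show False by presburger
  qed
  have "inj_on c R"
  proof (rule inj_onI)
    fix u v assume "u \<in> R" "v \<in> R" "c u = c v"
    then show "u = v" using distinct distinct[of v u] by (cases u v rule: linorder_cases) auto
  qed
  have "s + chi_dom_path (n - s) = card R"
  proof -
    have "{..<s} \<inter> (+) s ` {j. j < n - s \<and> j mod 4 < 2} = {}" by auto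
    then have "card R = s + card ((+) s ` {j. j < n - s \<and> j mod 4 < 2})"
      unfolding R_def by (subst card_Un_disjoint) auto
    also have "\<dots> = s + chi_dom_path (n - s)"
      by (subst card_image) (simp_all add: card_mod_4_less_2)
    finally show ?thesis by simp
  qed
  also have "\<dots> = card (c ` R)" using \<open>inj_on c R\<close> by (simp add: card_image)
  also have "\<dots> \<le> card {..<k}"
    using dc R_sub unfolding dominated_coloring_def by (intro card_mono) auto
  finally show ?thesis by simp
qed

lemma le_chi_dom_path_subgraph:
  assumes "E \<subseteq> path_edges n" "no_isolated {0..<n} E" "s \<le> n"
    "\<forall>u<s. {u, Suc u} \<notin> E \<or> {Suc u, Suc (Suc u)} \<notin> E"
  shows "s + chi_dom_path (n - s) \<le> chi_dom {0..<n} E"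
  by (rule le_chi_dom[OF dominated_coloring_id[OF assms(2)]])
    (rule dominated_coloring_path_subgraph_ge[OF _ assms(1,3,4)])

lemma chi_dom_path_edges:
  assumes "2 \<le> n"
  shows "chi_dom {0..<n} (path_edges n) = chi_dom_path n"
proof (rule antisym)
  have col: "dominated_coloring {0..<n} (path_edges n) (chi_dom_path n) path_colour"
    using dominated_coloring_segment[of 0 n] assms by (simp add: path_edges_eq_segment_edges)
  then show "chi_dom {0..<n} (path_edges n) \<le> chi_dom_path n" by (rule chi_dom_le)
  show "chi_dom_path n \<le> chi_dom {0..<n} (path_edges n)"
  proof (rule le_chi_dom[OF col])
    fix k c assume "dominated_coloring {0..<n} (path_edges n) k c"
    from dominated_coloring_path_subgraph_ge[OF this subset_refl, of 0] show "chi_dom_path n \<le> k"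
      by simp
  qed
qed

lemma path_edges_Diff_edge:
  "Suc i < n \<Longrightarrow> path_edges n - {{i, Suc i}} = segment_edges 0 (Suc i) \<union> segment_edges (Suc i) n"
  unfolding path_edges_def segment_edges_def by (auto simp: doubleton_eq_iff)

lemma no_isolated_path_edges_Diff_odd:
  assumes "2 \<le> n" and F: "\<forall>e\<in>F. \<exists>i. odd i \<and> Suc (Suc i) < n \<and> e = {i, Suc i}"
  shows "no_isolated {0..<n} (path_edges n - F)"
  unfolding no_isolated_def
proof
  fix v assume "v \<in> {0..<n}"
  have edge: "{j, Suc j} \<in> path_edges n" if "Suc j < n" for j
    using that unfolding path_edges_def by blast
  show "\<exists>w\<in>{0..<n}. adj (path_edges n - F) w v"
  proof (cases "odd v \<or> Suc v = n")
    case True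
    with assms(1) have "0 < v" by (auto intro: odd_pos)
    then have v: "v = Suc (v - 1)" by simp
    have "{v - 1, v} \<notin> F"
    proof
      assume "{v - 1, v} \<in> F"
      with F obtain i where "odd i" "Suc (Suc i) < n" "{v - 1, v} = {i, Suc i}" by blast
      with v have "i = v - 1" by (auto simp: doubleton_eq_iff)
      with True v \<open>odd i\<close> \<open>Suc (Suc i) < n\<close> show False by auto
    qed
    with edge[of "v - 1"] v \<open>v \<in> {0..<n}\<close> show ?thesis
      unfolding adj_def by (intro bexI[of _ "v - 1"]) auto
  next
    case False
    with \<open>v \<in> {0..<n}\<close> have "even v" "Suc v < n" by auto
    have "{v, Suc v} \<notin> F"
    proof
      assume "{v, Suc v} \<in> F"
      with F obtain i where "odd i" "{v, Suc v} = {i, Suc i}" by blast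
      with \<open>even v\<close> show False by (auto simp: doubleton_eq_iff)
    qed
    with edge[of v] \<open>Suc v < n\<close> show ?thesis
      unfolding adj_def by (intro bexI[of _ "Suc v"]) (auto simp: insert_commute)
  qed
qed

lemma no_isolated_path_edges_Diff_edgeD:
  assumes ni: "no_isolated {0..<n} (path_edges n - {{i, Suc i}})" and "Suc i < n"
  shows "0 < i \<and> Suc (Suc i) < n"
proof -
  let ?E = "path_edges n - {{i, Suc i}}"
  have nbr: "\<exists>w. adj ?E w v \<and> (v = Suc w \<or> w = Suc v) \<and> w < n" if "v < n" for v
  proof -
    from that have "v \<in> {0..<n}" by simp
    with ni obtain w where "adj ?E w v" unfolding no_isolated_def by blast
    moreover have "?E \<subseteq> segment_edges 0 n" by (auto simp: path_edges_eq_segment_edges)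
    ultimately show ?thesis using adj_segment_edgesD by blast
  qed
  have "0 < i"
  proof (rule ccontr)
    assume "\<not> 0 < i"
    with nbr[of 0] \<open>Suc i < n\<close> obtain w where "adj ?E w 0" "w = 1" by auto
    with \<open>\<not> 0 < i\<close> show False unfolding adj_def by (auto simp: insert_commute)
  qed
  moreover have "Suc (Suc i) < n"
  proof (rule ccontr)
    assume "\<not> Suc (Suc i) < n"
    with nbr[of "Suc i"] \<open>Suc i < n\<close> obtain w where "adj ?E w (Suc i)" "w = i" by auto
    then show False unfolding adj_def by auto
  qed
  ultimately show ?thesis ..
qed

lemma finite_path_edges: "finite (path_edges n)"
  by (rule finite_subset[of _ "Pow {0..<n}"]) (auto simp: path_edges_def)

lemma chi_dom_path_edges_Diff_edge:
  assumes "n mod 4 = 2" "Suc i < n" and ni: "no_isolated {0..<n} (path_edges n - {{i, Suc i}})"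
  shows "chi_dom {0..<n} (path_edges n - {{i, Suc i}}) = chi_dom_path n"
proof (rule antisym)
  from no_isolated_path_edges_Diff_edgeD[OF ni assms(2)] have "0 < i" "Suc (Suc i) < n" by auto
  have "dominated_coloring {0..<Suc i} (segment_edges 0 (Suc i)) (chi_dom_path (Suc i)) path_colour"
    using dominated_coloring_segment[of 0 "Suc i"] \<open>0 < i\<close> by simp
  moreover have "dominated_coloring {Suc i..<n} (segment_edges (Suc i) n) (chi_dom_path (n - Suc i))
      (\<lambda>v. path_colour (v - Suc i))"
    using dominated_coloring_segment[of "Suc i" n] \<open>Suc (Suc i) < n\<close> by simp
  ultimately have "dominated_coloring ({0..<Suc i} \<union> {Suc i..<n})
      (segment_edges 0 (Suc i) \<union> segment_edges (Suc i) n)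
      (chi_dom_path (Suc i) + chi_dom_path (n - Suc i))
      (\<lambda>v. if v \<in> {0..<Suc i} then path_colour v else chi_dom_path (Suc i) + path_colour (v - Suc i))"
    by (rule dominated_coloring_Un) (auto dest: segment_edges_subset)
  then have "chi_dom {0..<n} (path_edges n - {{i, Suc i}}) \<le> chi_dom_path (Suc i) + chi_dom_path (n - Suc i)"
    using \<open>Suc i < n\<close> by (simp add: path_edges_Diff_edge ivl_disj_un_two(3) chi_dom_le)
  also have "\<dots> = chi_dom_path n"
    using chi_dom_path_add[of "Suc i" "n - Suc i"] assms(1,2) by simp
  finally show "chi_dom {0..<n} (path_edges n - {{i, Suc i}}) \<le> chi_dom_path n" .
  show "chi_dom_path n \<le> chi_dom {0..<n} (path_edges n - {{i, Suc i}})"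
    using le_chi_dom_path_subgraph[of "path_edges n - {{i, Suc i}}" n 0] ni by auto
qed

lemma path_edges_card_1E:
  assumes "F \<subseteq> path_edges n" "card F = 1"
  obtains i where "Suc i < n" "F = {{i, Suc i}}"
proof -
  from \<open>card F = 1\<close> obtain e where "F = {e}" by (auto simp: card_1_singleton_iff)
  with assms(1) that show thesis unfolding path_edges_def by auto
qed

lemma chi_dom_path_edges_Diff_card_1:
  assumes "n mod 4 = 2" "F \<subseteq> path_edges n" "card F = 1" "no_isolated {0..<n} (path_edges n - F)"
  shows "chi_dom {0..<n} (path_edges n - F) = chi_dom_path n"
proof -
  from assms(2,3) obtain i where "Suc i < n" "F = {{i, Suc i}}" by (rule path_edges_card_1E)
  with assms(1,4) show ?thesis by (simp add: chi_dom_path_edges_Diff_edge)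
qed

lemma chi_dom_path_edges_Diff_12:
  assumes "4 \<le> n" "n mod 4 \<noteq> 2"
  shows "{{1, 2}} \<subseteq> path_edges n" and "no_isolated {0..<n} (path_edges n - {{1, 2}})"
    and "chi_dom_path n < chi_dom {0..<n} (path_edges n - {{1, 2}})"
proof -
  show "{{1, 2}} \<subseteq> path_edges n"
    using assms(1) unfolding path_edges_def by (auto simp: numeral_2_eq_2 intro!: exI[of _ 1])
  have edge: "\<exists>i. odd i \<and> Suc (Suc i) < n \<and> e = {i, Suc i}" if "e \<in> {{1, 2}}" for e
    using that assms(1) by (intro exI[of _ 1]) (simp add: numeral_2_eq_2)
  show ni: "no_isolated {0..<n} (path_edges n - {{1, 2}})"
    using assms(1) by (intro no_isolated_path_edges_Diff_odd ballI edge) simp_all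
  define m where "m = n - 2"
  with assms(1) have n: "n = m + 2" by simp
  have "m mod 4 \<noteq> 0" using assms(2) unfolding n by presburger
  from chi_dom_path_add_2_less[OF this] have "chi_dom_path n < chi_dom_path (n - 2) + 2"
    unfolding n by simp
  also have "\<dots> \<le> chi_dom {0..<n} (path_edges n - {{1, 2}})"
    using le_chi_dom_path_subgraph[OF Diff_subset ni, of 2] assms(1)
    by (simp add: less_Suc_eq numeral_2_eq_2)
  finally show "chi_dom_path n < chi_dom {0..<n} (path_edges n - {{1, 2}})" .
qed

lemma chi_dom_path_edges_Diff_12_34:
  assumes "6 \<le> n"
  shows "{{1, 2}, {3, 4}} \<subseteq> path_edges n" and "no_isolated {0..<n} (path_edges n - {{1, 2}, {3, 4}})"
    and "chi_dom_path n < chi_dom {0..<n} (path_edges n - {{1, 2}, {3, 4}})"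
proof -
  have edges: "\<exists>i. odd i \<and> Suc (Suc i) < n \<and> e = {i, Suc i}" if "e \<in> {{1, 2}, {3, 4}}" for e
  proof -
    from that consider "e = {1, 2}" | "e = {3, 4}" by blast
    then show ?thesis
    proof cases
      case 1
      with assms show ?thesis by (intro exI[of _ 1]) (simp add: numeral_2_eq_2)
    next
      case 2
      with assms show ?thesis by (intro exI[of _ 3]) simp
    qed
  qed
  show "{{1, 2}, {3, 4}} \<subseteq> path_edges n"
    using assms unfolding path_edges_def by (auto simp: numeral_eq_Suc)
  show ni: "no_isolated {0..<n} (path_edges n - {{1, 2}, {3, 4}})"
    using assms by (intro no_isolated_path_edges_Diff_odd ballI edges) simp_all
  have "chi_dom_path n = 2 + chi_dom_path (n - 4)"
    using chi_dom_path_mult_add[of 1 "n - 4"] assms by simp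
  also have "\<dots> < 4 + chi_dom_path (n - 4)" by simp
  also have "\<dots> \<le> chi_dom {0..<n} (path_edges n - {{1, 2}, {3, 4}})"
    using le_chi_dom_path_subgraph[OF Diff_subset ni, of 4] assms
    by (simp add: less_Suc_eq numeral_eq_Suc)
  finally show "chi_dom_path n < chi_dom {0..<n} (path_edges n - {{1, 2}, {3, 4}})" .
qed

theorem mainTheorem13:
  fixes n :: nat
  assumes "n \<ge> 4"
  shows "B_dom {0..<n} (path_edges n) = (if n mod 4 = 2 then 2 else 1)"
proof -
  have chi: "chi_dom {0..<n} (path_edges n) = chi_dom_path n"
    using assms by (intro chi_dom_path_edges) simp
  show ?thesis
  proof (cases "n mod 4 = 2")
    case False
    have "B_dom {0..<n} (path_edges n) = 1"
      using chi_dom_path_edges_Diff_12[OF assms False] chi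
      by (intro B_dom_eqI[OF finite_path_edges]) auto
    with False show ?thesis by simp
  next
    case True
    with assms have "6 \<le> n" by presburger
    have "card {{1, 2}, {3, 4 :: nat}} = 2" by (simp add: doubleton_eq_iff)
    moreover have "chi_dom {0..<n} (path_edges n - F) = chi_dom {0..<n} (path_edges n)"
      if "F \<subseteq> path_edges n" "0 < card F" "card F < 2" "no_isolated {0..<n} (path_edges n - F)" for F
      using chi_dom_path_edges_Diff_card_1[OF True that(1) _ that(4)] that(2,3) chi by simp
    ultimately have "B_dom {0..<n} (path_edges n) = 2"
      using chi_dom_path_edges_Diff_12_34[OF \<open>6 \<le> n\<close>] chi
      by (intro B_dom_eqI[OF finite_path_edges]) auto
    with True show ?thesis by simp
  qed
qed

end
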